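(* Let $u,v$ be two finite words over $A_q$ and let $n,m,i,j\in\mathbb{N}$. If $n\xrightarrow{u} m$ is a path in $\mathcal{T}_{p/q}$ and $i\xrightarrow{u|v} j$ is a path in $\mathcal{D}_{p/q}$ (reading input $u$, producing output $v$), then $(n+i+1)\xrightarrow{v}(m+j+1)$ is a path in $\mathcal{T}_{p/q}$.
   Context: Let $p>q>1$ be coprime integers, $A_p=\{0,\dots,p-1\}$, $A_q=\{0,\dots,q-1\}$ and $B=\{p-(2q-1),\dots,p-1\}$. For $n\in\mathbb{N}$ and $a\in\mathbb{Z}$, let $\tau(n,a)=\frac{np+a}{q}$, defined only when $q$ divides $np+a$. Let $\mathcal{T}_{p/q}$ be the deterministic automaton with state set $\mathbb{N}$, alphabet $A_p$, and transitions $n\xrightarrow{a}\tau(n,a)$ for $a\in A_p$ with $\tau(n,a)$ defined. For $a\in B$ let $\omega(a)=\{(b,c)\in A_q\times A_q : c-b=a-(p-q)\}$. The transducer $\mathcal{D}_{p/q}$ has state set $\mathbb{N}$, input and output alphabet $A_q$, and a transition $n\xrightarrow{b|c}\tau(n,a)$ (input $b$, output $c$) for every $n\in\mathbb{N}$, $a\in B$ with $\tau(n,a)$ defined, and $(b,c)\in\omega(a)$; no other transitions. Paths are concatenations of transitions, with labels concatenated. *)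

theory Defs
  imports Main
begin

(* tau(n,a) = (n p + a)/q, defined only when q divides n p + a.
   States are natural numbers; letters are integers (B may contain negative letters). *)

definition tau_defined :: "int \<Rightarrow> int \<Rightarrow> nat \<Rightarrow> int \<Rightarrow> bool" where
  "tau_defined p q n a \<longleftrightarrow> q dvd (int n * p + a)"

definition tau :: "int \<Rightarrow> int \<Rightarrow> nat \<Rightarrow> int \<Rightarrow> int" where
  "tau p q n a = (int n * p + a) div q"

inductive T_path :: "int \<Rightarrow> int \<Rightarrow> nat \<Rightarrow> int list \<Rightarrow> nat \<Rightarrow> bool"
  for p q :: int where
  T_nil: "T_path p q n [] n"
| T_step: "\<lbrakk> 0 \<le> a; a < p; tau_defined p q n a; tau p q n a = int k;
             T_path p q k w m \<rbrakk> \<Longrightarrow> T_path p q n (a # w) m"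

definition B_set :: "int \<Rightarrow> int \<Rightarrow> int set" where
  "B_set p q = {p - (2*q - 1) .. p - 1}"

definition omega :: "int \<Rightarrow> int \<Rightarrow> int \<Rightarrow> (int \<times> int) set" where
  "omega p q a = {(b, c). 0 \<le> b \<and> b < q \<and> 0 \<le> c \<and> c < q \<and> c - b = a - (p - q)}"

inductive D_path :: "int \<Rightarrow> int \<Rightarrow> nat \<Rightarrow> int list \<Rightarrow> int list \<Rightarrow> nat \<Rightarrow> bool"
  for p q :: int where
  D_nil: "D_path p q n [] [] n"
| D_step: "\<lbrakk> a \<in> B_set p q; tau_defined p q n a; tau p q n a = int k;
             (b, c) \<in> omega p q a; D_path p q k u v m \<rbrakk>
           \<Longrightarrow> D_path p q n (b # u) (c # v) m"

end

theory Submission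
  imports Defs
begin

(* A transition n --b--> n' of T and a transition i --b|c--> i' of D combine to
   n + i + 1 --c--> n' + i' + 1, because (n+i+1) p + c = (n p + b) + (i p + a) + q
   exactly when c - b = a - (p - q). *)

lemma tau_transition_iff:
  assumes "q \<noteq> 0"
  shows "tau_defined p q n a \<and> tau p q n a = int k \<longleftrightarrow> int n * p + a = q * int k"
  using assms unfolding tau_defined_def tau_def by auto

lemma T_path_Cons_cases:
  assumes "T_path p q n (b # u) m"
  obtains n' where "0 \<le> b" "b < p" "tau_defined p q n b" "tau p q n b = int n'"
    "T_path p q n' u m"
  using assms by (cases rule: T_path.cases) auto

lemma T_path_shift_by_D_path:
  assumes "D_path p q i u v j" and "0 < q" and "q \<le> p"
    and "T_path p q n u m"
  shows "T_path p q (n + i + 1) v (m + j + 1)"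
  using assms
proof (induction arbitrary: n rule: D_path.induct)
  case (D_nil i)
  then have "m = n" by (auto elim: T_path.cases)
  then show ?case by (simp add: T_nil)
next
  case (D_step a i k b c u v j)
  from \<open>T_path p q n (b # u) m\<close> obtain n' where
    n_step: "tau_defined p q n b" "tau p q n b = int n'" and n'_path: "T_path p q n' u m"
    by (rule T_path_Cons_cases)
  have shifted: "T_path p q (n' + k + 1) v (m + j + 1)"
    using D_step.IH D_step.prems n'_path by blast
  have "int n * p + b = q * int n'"
    using n_step tau_transition_iff[of q] D_step.prems by auto
  moreover have "int i * p + a = q * int k"
    using D_step.hyps(2,3) tau_transition_iff[of q] D_step.prems by auto
  moreover have c: "c - b = a - (p - q)" "0 \<le> c" "c < q"
    using D_step.hyps(4) unfolding omega_def by auto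
  ultimately have "int (n + i + 1) * p + c = q * int (n' + k + 1)"
    by (simp add: algebra_simps)
  then have "tau_defined p q (n + i + 1) c \<and> tau p q (n + i + 1) c = int (n' + k + 1)"
    using tau_transition_iff[of q p "n + i + 1" c "n' + k + 1"] D_step.prems by linarith
  with c D_step.prems shifted show ?case
    by (intro T_step[of c p q "n + i + 1" "n' + k + 1"]) auto
qed

theorem mainTheorem5:
  fixes p q :: int and u v :: "int list" and n m i j :: nat
  assumes "p > q" and "q > 1" and "coprime p q"
    and "set u \<subseteq> {0..<q}" and "set v \<subseteq> {0..<q}"
    and "T_path p q n u m"
    and "D_path p q i u v j"
  shows "T_path p q (n + i + 1) v (m + j + 1)"
  using T_path_shift_by_D_path[OF assms(7)] assms(1,2,6) by simp

end
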